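(* Let $(X,d)$ be a compact metric space and let $f:X\to X$ be a continuous map. Then there is no subsystem $(Y,f|_Y)$ of $(X,f)$ such that the chain components poset $(\mathfrak{C}(Y,f|_Y),\preceq)$ is linearly and densely ordered.
   Context: A subsystem of $(X,f)$ is a pair $(Y,f|_Y)$ with $Y\subseteq X$ closed and $f$-invariant, i.e. $f(Y)\subseteq Y$. For a metric space $(Z,d)$ and map $g:Z\to Z$: an $\varepsilon$-chain from $x$ to $y$ is a finite sequence $x_0=x,\dots,x_n=y$ in $Z$, $n\ge1$, with $d(g(x_i),x_{i+1})<\varepsilon$; $x\,\mathcal{C}\,y$ iff for every $\varepsilon>0$ there is an $\varepsilon$-chain from $x$ to $y$; $CR(Z,g)=\{x:x\,\mathcal{C}\,x\}$; $x\,E\,y$ iff $x\,\mathcal{C}\,y$ and $y\,\mathcal{C}\,x$; $\mathfrak{C}(Z,g)=CR(Z,g)/E$ (chain components), ordered by $[x]\preceq[y]$ iff $y\,\mathcal{C}\,x$. A poset is densely ordered if it has at least two elements and for every $a<b$ there is $c$ with $a<c<b$. *)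

theory Defs
  imports "HOL-Analysis.Analysis"
begin

definition eps_chain :: "'a::metric_space set \<Rightarrow> ('a \<Rightarrow> 'a) \<Rightarrow> real \<Rightarrow> 'a \<Rightarrow> 'a \<Rightarrow> bool" where
  "eps_chain Z g e x y \<longleftrightarrow>
     (\<exists>n::nat. \<exists>xs::nat \<Rightarrow> 'a. n \<ge> 1 \<and> xs 0 = x \<and> xs n = y \<and> (\<forall>i\<le>n. xs i \<in> Z)
        \<and> (\<forall>i<n. dist (g (xs i)) (xs (Suc i)) < e))"

definition chain_rel :: "'a::metric_space set \<Rightarrow> ('a \<Rightarrow> 'a) \<Rightarrow> 'a \<Rightarrow> 'a \<Rightarrow> bool" where
  "chain_rel Z g x y \<longleftrightarrow> (\<forall>e>0. eps_chain Z g e x y)"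

definition chain_recurrent :: "'a::metric_space set \<Rightarrow> ('a \<Rightarrow> 'a) \<Rightarrow> 'a set" where
  "chain_recurrent Z g = {x \<in> Z. chain_rel Z g x x}"

definition chain_equiv :: "'a::metric_space set \<Rightarrow> ('a \<Rightarrow> 'a) \<Rightarrow> ('a \<times> 'a) set" where
  "chain_equiv Z g = {(x, y). x \<in> chain_recurrent Z g \<and> y \<in> chain_recurrent Z g
                        \<and> chain_rel Z g x y \<and> chain_rel Z g y x}"

definition chain_components :: "'a::metric_space set \<Rightarrow> ('a \<Rightarrow> 'a) \<Rightarrow> 'a set set" where
  "chain_components Z g = chain_recurrent Z g // chain_equiv Z g"

definition comp_le :: "'a::metric_space set \<Rightarrow> ('a \<Rightarrow> 'a) \<Rightarrow> 'a set \<Rightarrow> 'a set \<Rightarrow> bool" where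
  "comp_le Z g A B \<longleftrightarrow> (\<exists>x\<in>A. \<exists>y\<in>B. chain_rel Z g y x)"

definition linearly_densely_ordered :: "'b set \<Rightarrow> ('b \<Rightarrow> 'b \<Rightarrow> bool) \<Rightarrow> bool" where
  "linearly_densely_ordered P le \<longleftrightarrow>
     (\<forall>a\<in>P. \<forall>b\<in>P. le a b \<or> le b a) \<and>
     (\<exists>a\<in>P. \<exists>b\<in>P. a \<noteq> b) \<and>
     (\<forall>a\<in>P. \<forall>b\<in>P. le a b \<and> a \<noteq> b \<longrightarrow> (\<exists>c\<in>P. le a c \<and> a \<noteq> c \<and> le c b \<and> c \<noteq> b))"

end

theory Submission
  imports Defs
begin

text \<open>
  Suppose the chain components of a compact subsystem Y are linearly ordered and pick chain
  recurrent points a, b such that for some \<open>\<epsilon> > 0\<close> there is no \<open>\<epsilon>\<close>-chain from a to b.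
  The set R of points reachable from a by \<open>\<epsilon>\<close>-chains is open in Y and closed under the
  chain relation; its trace on the chain recurrent set CR is also closed, because a chain
  from a chain recurrent point z back to itself can be rerouted to start at any nearby
  point of R. So CR splits into the compact pieces \<open>CR \<inter> R\<close> (a lower set of components)
  and \<open>CR - R\<close> (an upper set). By compactness and linearity (finite intersection property)
  the first has a greatest component and the second a least one, and nothing lies strictly
  between them, contradicting density.
\<close>

lemma eps_chain_endpoints: "eps_chain Z g e x y \<Longrightarrow> x \<in> Z \<and> y \<in> Z"
  unfolding eps_chain_def by (metis le0 order_refl)

lemma eps_chain_step: "x \<in> Z \<Longrightarrow> y \<in> Z \<Longrightarrow> dist (g x) y < e \<Longrightarrow> eps_chain Z g e x y"
  unfolding eps_chain_def
  by (rule exI[of _ 1], rule exI[of _ "\<lambda>i. if i = 0 then x else y"]) (simp add: le_Suc_eq)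

lemma eps_chain_mono: "eps_chain Z g e x y \<Longrightarrow> e \<le> e' \<Longrightarrow> eps_chain Z g e' x y"
  unfolding eps_chain_def by (blast intro: less_le_trans)

lemma eps_chain_trans:
  assumes "eps_chain Z g e x y" "eps_chain Z g e y z"
  shows "eps_chain Z g e x z"
proof -
  obtain n xs where xs: "n \<ge> 1" "xs 0 = x" "xs n = y" "\<forall>i\<le>n. xs i \<in> Z"
      "\<forall>i<n. dist (g (xs i)) (xs (Suc i)) < e"
    using assms(1) unfolding eps_chain_def by blast
  obtain m ys where ys: "m \<ge> 1" "ys 0 = y" "ys m = z" "\<forall>i\<le>m. ys i \<in> Z"
      "\<forall>i<m. dist (g (ys i)) (ys (Suc i)) < e"
    using assms(2) unfolding eps_chain_def by blast
  define zs where "zs i = (if i \<le> n then xs i else ys (i - n))" for i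
  have "dist (g (zs i)) (zs (Suc i)) < e" if "i < n + m" for i
  proof (cases "i < n")
    case False
    then have "zs i = ys (i - n)" "zs (Suc i) = ys (Suc (i - n))"
      using xs(3) ys(2) by (auto simp: zs_def Suc_diff_le)
    then show ?thesis using ys(5) that False by simp
  qed (use xs in \<open>simp add: zs_def\<close>)
  moreover have "\<forall>i\<le>n + m. zs i \<in> Z"
    using xs ys by (simp add: zs_def)
  ultimately show ?thesis
    unfolding eps_chain_def using xs ys
    by (intro exI[of _ "n + m"] exI[of _ zs]) (simp add: zs_def)
qed

lemma eps_chain_last_step:
  assumes "eps_chain Z g e x y"
  obtains w where "w = x \<or> eps_chain Z g e x w" "w \<in> Z" "dist (g w) y < e"
proof -
  obtain n xs where xs: "n \<ge> 1" "xs 0 = x" "xs n = y" "\<forall>i\<le>n. xs i \<in> Z"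
      "\<forall>i<n. dist (g (xs i)) (xs (Suc i)) < e"
    using assms unfolding eps_chain_def by blast
  then obtain k where k: "n = Suc k" by (cases n) auto
  have "xs k = x \<or> eps_chain Z g e x (xs k)"
  proof (cases "k = 0")
    case False
    then show ?thesis
      unfolding eps_chain_def using xs k by (intro disjI2 exI[of _ k] exI[of _ xs]) auto
  qed (use xs in simp)
  moreover have "xs k \<in> Z" "dist (g (xs k)) y < e"
    using xs k by auto
  ultimately show thesis by (rule that)
qed

lemma eps_chain_first_step:
  assumes "eps_chain Z g e x y"
  obtains w where "w = y \<or> eps_chain Z g e w y" "w \<in> Z" "dist (g x) w < e"
proof -
  obtain n xs where xs: "n \<ge> 1" "xs 0 = x" "xs n = y" "\<forall>i\<le>n. xs i \<in> Z"
      "\<forall>i<n. dist (g (xs i)) (xs (Suc i)) < e"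
    using assms unfolding eps_chain_def by blast
  then obtain k where k: "n = Suc k" by (cases n) auto
  have "xs 1 = y \<or> eps_chain Z g e (xs 1) y"
  proof (cases "k = 0")
    case False
    then show ?thesis
      unfolding eps_chain_def using xs k
      by (intro disjI2 exI[of _ k] exI[of _ "\<lambda>i. xs (Suc i)"]) auto
  qed (use xs k in simp)
  moreover have "xs 1 \<in> Z" "dist (g x) (xs 1) < e"
    using xs k by auto
  ultimately show thesis by (rule that)
qed

lemma eps_chain_perturb_end:
  assumes "eps_chain Z g e x y" "y' \<in> Z" "dist y y' < d"
  shows "eps_chain Z g (e + d) x y'"
proof -
  obtain w where w: "w = x \<or> eps_chain Z g e x w" "w \<in> Z" "dist (g w) y < e"
    using eps_chain_last_step[OF assms(1)] .
  have "dist (g w) y' < e + d"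
    using dist_triangle[of "g w" y' y] w(3) assms(3) by simp
  then have "eps_chain Z g (e + d) w y'"
    using w(2) assms(2) by (rule eps_chain_step[rotated 2])
  moreover have "e \<le> e + d"
    using assms(3) zero_le_dist[of y y'] by linarith
  ultimately show ?thesis
    using w(1) eps_chain_mono eps_chain_trans by blast
qed

lemma eps_chain_perturb_start:
  assumes "eps_chain Z g e x y" "x' \<in> Z" "dist (g x') (g x) < d"
  shows "eps_chain Z g (e + d) x' y"
proof -
  obtain w where w: "w = y \<or> eps_chain Z g e w y" "w \<in> Z" "dist (g x) w < e"
    using eps_chain_first_step[OF assms(1)] .
  have "dist (g x') w < e + d"
    using dist_triangle[of "g x'" w "g x"] w(3) assms(3) by simp
  then have "eps_chain Z g (e + d) x' w"
    using assms(2) w(2) by (rule eps_chain_step[rotated 2])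
  moreover have "e \<le> e + d"
    using assms(3) zero_le_dist[of "g x'" "g x"] by linarith
  ultimately show ?thesis
    using w(1) eps_chain_mono eps_chain_trans by blast
qed

lemma openin_eps_chain_reachable: "openin (top_of_set Z) {y. eps_chain Z g e x y}"
  unfolding openin_euclidean_subtopology_iff
proof (intro conjI ballI)
  show "{y. eps_chain Z g e x y} \<subseteq> Z"
    using eps_chain_endpoints by blast
next
  fix y assume "y \<in> {y. eps_chain Z g e x y}"
  then obtain w where w: "w = x \<or> eps_chain Z g e x w" "w \<in> Z" "dist (g w) y < e"
    using eps_chain_last_step by blast
  have "eps_chain Z g e x y'" if "y' \<in> Z" "dist y' y < e - dist (g w) y" for y'
  proof -
    have "eps_chain Z g e w y'"
      using dist_triangle[of "g w" y' y] that w(2) by (intro eps_chain_step) (auto simp: dist_commute)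
    then show ?thesis
      using w(1) eps_chain_trans by blast
  qed
  then show "\<exists>r>0. \<forall>y'\<in>Z. dist y' y < r \<longrightarrow> y' \<in> {y. eps_chain Z g e x y}"
    using w(3) by (intro exI[of _ "e - dist (g w) y"]) auto
qed

lemma chain_rel_trans: "chain_rel Z g x y \<Longrightarrow> chain_rel Z g y z \<Longrightarrow> chain_rel Z g x z"
  unfolding chain_rel_def by (meson eps_chain_trans)

lemma chain_rel_endpoints: "chain_rel Z g x y \<Longrightarrow> x \<in> Z \<and> y \<in> Z"
  unfolding chain_rel_def using eps_chain_endpoints zero_less_one by blast

lemma closed_chain_rel:
  assumes "closed Y" "continuous_on Y f"
  shows "closed {(x, y). chain_rel Y f x y}"
proof -
  let ?C = "{(x, y). chain_rel Y f x y}"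
  have "?C \<subseteq> Y \<times> Y"
    using chain_rel_endpoints by auto
  then have closure_C: "closure ?C \<subseteq> Y \<times> Y"
    using closure_minimal closed_Times[OF assms(1) assms(1)] by blast
  have "chain_rel Y f x y" if xy: "(x, y) \<in> closure ?C" for x y
  proof -
    have "x \<in> Y" "y \<in> Y"
      using xy closure_C by auto
    have "eps_chain Y f e x y" if "e > 0" for e
    proof -
      have "e/3 > 0"
        using \<open>e > 0\<close> by simp
      then obtain d where d: "d > 0" "\<forall>u\<in>Y. dist u x < d \<longrightarrow> dist (f u) (f x) < e/3"
        using assms(2) \<open>x \<in> Y\<close> unfolding continuous_on_iff by blast
      obtain u v where uv: "chain_rel Y f u v" "dist (u, v) (x, y) < min d (e/3)"
      proof -
        have "min d (e/3) > 0" using d(1) \<open>e > 0\<close> by simp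
        then obtain p where "p \<in> ?C" "dist p (x, y) < min d (e/3)"
          using xy unfolding closure_approachable by blast
        then show thesis using that by (cases p) simp
      qed
      have "dist u x < d" "dist v y < e/3"
        using uv(2) dist_fst_le[of "(u, v)" "(x, y)"] dist_snd_le[of "(u, v)" "(x, y)"] by auto
      have "u \<in> Y"
        using chain_rel_endpoints[OF uv(1)] by blast
      moreover have "eps_chain Y f (e/3) u v"
        using uv(1) \<open>e > 0\<close> unfolding chain_rel_def by simp
      moreover have "dist (f x) (f u) < e/3"
        using d(2) \<open>u \<in> Y\<close> \<open>dist u x < d\<close> by (simp add: dist_commute)
      ultimately have "eps_chain Y f (e/3 + e/3) x v"
        using \<open>x \<in> Y\<close> by (intro eps_chain_perturb_start[of _ _ _ u])
      then have "eps_chain Y f (e/3 + e/3 + e/3) x y"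
        using \<open>y \<in> Y\<close> \<open>dist v y < e/3\<close> by (rule eps_chain_perturb_end)
      then show ?thesis by simp
    qed
    then show ?thesis unfolding chain_rel_def by blast
  qed
  then have "closure ?C \<subseteq> ?C"
    by auto
  then show ?thesis
    by (simp only: closure_subset_eq)
qed

lemma closed_chain_rel_from:
  assumes "closed Y" "continuous_on Y f"
  shows "closed {y. chain_rel Y f x y}"
  using continuous_closed_vimage[OF closed_chain_rel[OF assms], of "\<lambda>y. (x, y)"]
  by (simp add: continuous_on_Pair)

lemma closed_chain_rel_to:
  assumes "closed Y" "continuous_on Y f"
  shows "closed {x. chain_rel Y f x y}"
  using continuous_closed_vimage[OF closed_chain_rel[OF assms], of "\<lambda>x. (x, y)"]
  by (simp add: continuous_on_Pair)

lemma closed_chain_recurrent: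
  assumes "closed Y" "continuous_on Y f"
  shows "closed (chain_recurrent Y f)"
proof -
  have "chain_recurrent Y f = (\<lambda>x. (x, x)) -` {(x, y). chain_rel Y f x y}"
    unfolding chain_recurrent_def using chain_rel_endpoints by auto
  then show ?thesis
    using continuous_closed_vimage[OF closed_chain_rel[OF assms], of "\<lambda>x. (x, x)"]
    by (simp add: continuous_on_Pair)
qed

lemma closed_chain_recurrent_Int_eps_reachable:
  assumes "closed Y" "continuous_on Y f" "e > 0"
  shows "closed (chain_recurrent Y f \<inter> {y. eps_chain Y f e x y})"
proof -
  let ?P = "chain_recurrent Y f \<inter> {y. eps_chain Y f e x y}"
  have "z \<in> ?P" if z: "z \<in> closure ?P" for z
  proof -
    have "z \<in> chain_recurrent Y f"
      using z closure_minimal[OF _ closed_chain_recurrent[OF assms(1,2)]] by blast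
    then have "z \<in> Y" "eps_chain Y f (e/2) z z"
      unfolding chain_recurrent_def chain_rel_def using \<open>e > 0\<close> by auto
    have "e/2 > 0"
      using \<open>e > 0\<close> by simp
    then obtain d where d: "d > 0" "\<forall>u\<in>Y. dist u z < d \<longrightarrow> dist (f u) (f z) < e/2"
      using assms(2) \<open>z \<in> Y\<close> unfolding continuous_on_iff by blast
    then obtain u where u: "u \<in> ?P" "dist u z < d"
      using z unfolding closure_approachable by blast
    then have "u \<in> Y"
      unfolding chain_recurrent_def by blast
    \<comment> \<open>z is chain recurrent, so a chain from z back to z may as well start at the nearby u\<close>
    then have "eps_chain Y f (e/2 + e/2) u z"
      using \<open>eps_chain Y f (e/2) z z\<close> d(2) u(2) by (intro eps_chain_perturb_start) auto
    then have "eps_chain Y f e x z"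
      using u(1) eps_chain_trans by auto
    then show ?thesis
      using \<open>z \<in> chain_recurrent Y f\<close> by blast
  qed
  then have "closure ?P \<subseteq> ?P"
    by blast
  then show ?thesis
    by (simp only: closure_subset_eq)
qed

lemma closed_chain_recurrent_Diff_eps_reachable:
  assumes "closed Y" "continuous_on Y f"
  shows "closed (chain_recurrent Y f - {y. eps_chain Y f e x y})"
proof -
  have "closedin (top_of_set Y) (Y - {y. eps_chain Y f e x y})"
    using openin_eps_chain_reachable by (metis closedin_diff closedin_topspace topspace_euclidean_subtopology)
  then have "closed (Y - {y. eps_chain Y f e x y})"
    using assms(1) by (rule closedin_closed_trans)
  moreover have "chain_recurrent Y f - {y. eps_chain Y f e x y}
      = chain_recurrent Y f \<inter> (Y - {y. eps_chain Y f e x y})"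
    unfolding chain_recurrent_def by blast
  ultimately show ?thesis
    using closed_chain_recurrent[OF assms] by (simp add: closed_Int)
qed

lemma finite_total_preorder_has_greatest:
  assumes "finite F" "F \<noteq> {}" "F \<subseteq> S"
    and total: "\<And>x y. x \<in> S \<Longrightarrow> y \<in> S \<Longrightarrow> r x y \<or> r y x"
    and transitive: "\<And>x y z. x \<in> S \<Longrightarrow> y \<in> S \<Longrightarrow> z \<in> S \<Longrightarrow> r x y \<Longrightarrow> r y z \<Longrightarrow> r x z"
  shows "\<exists>m\<in>F. \<forall>x\<in>F. r x m"
  using assms(1-3)
proof (induction F rule: finite_ne_induct)
  case (singleton x)
  then show ?case
    using total by blast
next
  case (insert x F)
  then obtain m where m: "m \<in> F" "\<forall>y\<in>F. r y m"
    by blast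
  show ?case
  proof (cases "r x m")
    case True
    then show ?thesis
      using m by blast
  next
    case False
    then have "r m x"
      using total[of x m] m(1) insert.prems by blast
    have "r y x" if "y \<in> insert x F" for y
    proof (cases "y = x")
      case True
      then show ?thesis
        using total[of x x] insert.prems by simp
    next
      case False
      then have "y \<in> F"
        using that by simp
      then show ?thesis
        using transitive[of y m x] m \<open>r m x\<close> insert.prems by blast
    qed
    then show ?thesis by blast
  qed
qed

lemma compact_total_preorder_has_greatest:
  assumes "compact K" "K \<noteq> {}"
    and total: "\<And>x y. x \<in> K \<Longrightarrow> y \<in> K \<Longrightarrow> r x y \<or> r y x"
    and transitive: "\<And>x y z. x \<in> K \<Longrightarrow> y \<in> K \<Longrightarrow> z \<in> K \<Longrightarrow> r x y \<Longrightarrow> r y z \<Longrightarrow> r x z"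
    and closed: "\<And>x. x \<in> K \<Longrightarrow> closed {y. r x y}"
  shows "\<exists>m\<in>K. \<forall>x\<in>K. r x m"
proof -
  have "K \<inter> (\<Inter>x\<in>K. {y. r x y}) \<noteq> {}"
  proof (rule compact_imp_fip_image[OF \<open>compact K\<close> closed])
    fix F assume F: "finite F" "F \<subseteq> K"
    show "K \<inter> (\<Inter>x\<in>F. {y. r x y}) \<noteq> {}"
    proof (cases "F = {}")
      case False
      have "\<exists>m\<in>F. \<forall>x\<in>F. r x m"
        by (rule finite_total_preorder_has_greatest[OF F(1) \<open>F \<noteq> {}\<close> F(2)]) (fact total transitive)+
      then obtain m where "m \<in> F" "\<forall>x\<in>F. r x m"
        by blast
      then show ?thesis
        using F(2) by blast
    qed (use \<open>K \<noteq> {}\<close> in simp)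
  qed
  then show ?thesis by blast
qed

lemma chain_recurrent_gap:
  assumes "compact Y" "continuous_on Y f"
    and total: "\<And>x y. x \<in> chain_recurrent Y f \<Longrightarrow> y \<in> chain_recurrent Y f \<Longrightarrow>
                  chain_rel Y f x y \<or> chain_rel Y f y x"
    and a: "a \<in> chain_recurrent Y f" and b: "b \<in> chain_recurrent Y f" "\<not> chain_rel Y f a b"
  obtains w z where "w \<in> chain_recurrent Y f" "z \<in> chain_recurrent Y f"
    "chain_rel Y f z w" "\<not> chain_rel Y f w z"
    "\<And>y. y \<in> chain_recurrent Y f \<Longrightarrow> chain_rel Y f y w \<Longrightarrow> chain_rel Y f z y \<Longrightarrow>
       chain_rel Y f w y \<or> chain_rel Y f y z"
proof -
  let ?CR = "chain_recurrent Y f" and ?C = "chain_rel Y f"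
  have "closed Y"
    using \<open>compact Y\<close> by (rule compact_imp_closed)
  obtain e where "e > 0" "\<not> eps_chain Y f e a b"
    using b(2) unfolding chain_rel_def by blast
  define R where "R = {y. eps_chain Y f e a y}"
  have R_successor_closed: "y' \<in> R" if "y \<in> R" "?C y y'" for y y'
    using that \<open>e > 0\<close> eps_chain_trans unfolding R_def chain_rel_def by blast
  define P where "P = ?CR \<inter> R"
  define Q where "Q = ?CR - R"
  have "?CR \<subseteq> Y"
    unfolding chain_recurrent_def by blast
  have "compact (Y \<inter> P)" "compact (Y \<inter> Q)"
    unfolding P_def Q_def R_def using \<open>compact Y\<close> \<open>closed Y\<close> \<open>continuous_on Y f\<close> \<open>e > 0\<close>
    by (simp_all add: compact_Int_closed closed_chain_recurrent_Int_eps_reachable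
        closed_chain_recurrent_Diff_eps_reachable)
  moreover have "Y \<inter> P = P" "Y \<inter> Q = Q"
    using \<open>?CR \<subseteq> Y\<close> unfolding P_def Q_def by auto
  ultimately have "compact P" "compact Q"
    by simp_all
  have "a \<in> P"
    using a \<open>e > 0\<close> unfolding P_def R_def chain_recurrent_def chain_rel_def by blast
  have "b \<in> Q"
    using b \<open>\<not> eps_chain Y f e a b\<close> unfolding Q_def R_def by blast
  obtain w where w: "w \<in> P" "\<forall>p\<in>P. ?C w p"
    using compact_total_preorder_has_greatest[OF \<open>compact P\<close>, of "\<lambda>x y. ?C y x"]
      \<open>a \<in> P\<close> total chain_rel_trans closed_chain_rel_to[OF \<open>closed Y\<close> \<open>continuous_on Y f\<close>]
    unfolding P_def by blast
  obtain z where z: "z \<in> Q" "\<forall>q\<in>Q. ?C q z"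
    using compact_total_preorder_has_greatest[OF \<open>compact Q\<close>, of ?C]
      \<open>b \<in> Q\<close> total chain_rel_trans closed_chain_rel_from[OF \<open>closed Y\<close> \<open>continuous_on Y f\<close>]
    unfolding Q_def by blast
  have "\<not> ?C w z"
    using w(1) z(1) R_successor_closed unfolding P_def Q_def by blast
  moreover have "?C w y \<or> ?C y z" if "y \<in> ?CR" for y
    using that w(2) z(2) unfolding P_def Q_def by blast
  ultimately show thesis
    using that w(1) z(1) total unfolding P_def Q_def by blast
qed

lemma equiv_chain_equiv: "equiv (chain_recurrent Z g) (chain_equiv Z g)"
  unfolding equiv_def refl_on_def sym_def trans_def chain_equiv_def chain_recurrent_def
  using chain_rel_trans by blast

lemma chain_components_eq_image:
  "chain_components Z g = (\<lambda>x. chain_equiv Z g `` {x}) ` chain_recurrent Z g"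
  unfolding chain_components_def quotient_def by blast

lemma chain_equiv_Image_eq_iff:
  assumes "x \<in> chain_recurrent Z g" "y \<in> chain_recurrent Z g"
  shows "chain_equiv Z g `` {x} = chain_equiv Z g `` {y} \<longleftrightarrow>
           chain_rel Z g x y \<and> chain_rel Z g y x"
  using eq_equiv_class_iff[OF equiv_chain_equiv assms] assms unfolding chain_equiv_def by blast

lemma comp_le_chain_equiv_Image_iff:
  assumes "x \<in> chain_recurrent Z g" "y \<in> chain_recurrent Z g"
  shows "comp_le Z g (chain_equiv Z g `` {x}) (chain_equiv Z g `` {y}) \<longleftrightarrow> chain_rel Z g y x"
proof
  assume "comp_le Z g (chain_equiv Z g `` {x}) (chain_equiv Z g `` {y})"
  then obtain x' y' where "chain_rel Z g y y'" "chain_rel Z g y' x'" "chain_rel Z g x' x"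
    unfolding comp_le_def chain_equiv_def by blast
  then show "chain_rel Z g y x"
    using chain_rel_trans by blast
next
  assume "chain_rel Z g y x"
  moreover have "x \<in> chain_equiv Z g `` {x}" "y \<in> chain_equiv Z g `` {y}"
    using assms equiv_class_self[OF equiv_chain_equiv] by blast+
  ultimately show "comp_le Z g (chain_equiv Z g `` {x}) (chain_equiv Z g `` {y})"
    unfolding comp_le_def by blast
qed

lemma linearly_densely_ordered_chain_components_iff:
  "linearly_densely_ordered (chain_components Z g) (comp_le Z g) \<longleftrightarrow>
     (\<forall>x\<in>chain_recurrent Z g. \<forall>y\<in>chain_recurrent Z g. chain_rel Z g x y \<or> chain_rel Z g y x) \<and>
     (\<exists>x\<in>chain_recurrent Z g. \<exists>y\<in>chain_recurrent Z g. \<not> chain_rel Z g x y) \<and>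
     (\<forall>x\<in>chain_recurrent Z g. \<forall>y\<in>chain_recurrent Z g.
        chain_rel Z g y x \<and> \<not> chain_rel Z g x y \<longrightarrow>
        (\<exists>c\<in>chain_recurrent Z g. chain_rel Z g c x \<and> \<not> chain_rel Z g x c \<and>
                                    chain_rel Z g y c \<and> \<not> chain_rel Z g c y))"
  unfolding linearly_densely_ordered_def chain_components_eq_image
  by (auto simp: chain_equiv_Image_eq_iff comp_le_chain_equiv_Image_iff) blast+

theorem corollary2p2:
  fixes X :: "'a::metric_space set" and f :: "'a \<Rightarrow> 'a"
  assumes "compact X" and "continuous_on X f" and "f ` X \<subseteq> X"
  shows "\<not> (\<exists>Y. Y \<subseteq> X \<and> closed Y \<and> f ` Y \<subseteq> Y \<and>
             linearly_densely_ordered (chain_components Y f) (comp_le Y f))"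
proof
  assume "\<exists>Y. Y \<subseteq> X \<and> closed Y \<and> f ` Y \<subseteq> Y \<and>
             linearly_densely_ordered (chain_components Y f) (comp_le Y f)"
  then obtain Y where "Y \<subseteq> X" "closed Y"
    and ordered: "linearly_densely_ordered (chain_components Y f) (comp_le Y f)"
    by blast
  have "compact Y"
    using compact_Int_closed[OF \<open>compact X\<close> \<open>closed Y\<close>] \<open>Y \<subseteq> X\<close> by (simp add: Int_absorb1)
  have "continuous_on Y f"
    using \<open>continuous_on X f\<close> \<open>Y \<subseteq> X\<close> by (rule continuous_on_subset)
  note components = ordered[unfolded linearly_densely_ordered_chain_components_iff]
  then have total: "\<And>x y. x \<in> chain_recurrent Y f \<Longrightarrow> y \<in> chain_recurrent Y f \<Longrightarrow>
      chain_rel Y f x y \<or> chain_rel Y f y x"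
    by blast
  obtain a b where ab: "a \<in> chain_recurrent Y f" "b \<in> chain_recurrent Y f" "\<not> chain_rel Y f a b"
    using components by blast
  obtain w z where gap: "w \<in> chain_recurrent Y f" "z \<in> chain_recurrent Y f"
      "chain_rel Y f z w" "\<not> chain_rel Y f w z"
      "\<And>y. y \<in> chain_recurrent Y f \<Longrightarrow> chain_rel Y f y w \<Longrightarrow> chain_rel Y f z y \<Longrightarrow>
         chain_rel Y f w y \<or> chain_rel Y f y z"
    using chain_recurrent_gap[OF \<open>compact Y\<close> \<open>continuous_on Y f\<close> _ ab] total by blast
  then show False
    using components by blast
qed

end
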